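(* For every $n\in\mathbb{N}$ there exists a directed acyclic graph $D_n$ with $\operatorname{dbw}(D_n)\ge n$.
   Context: For a digraph $D$ and $X\subseteq E(D)$, $S^V_X=\{y: \exists x,z,\ \vec{xy}\in E(D)\setminus X,\ \vec{yz}\in X\}$. The directed branch-width $\operatorname{dbw}(D)$ is the minimum over pairs $(T,\beta)$ ($T$ a tree of maximum degree at most three, $\beta$ a bijection from the leaves of $T$ onto $E(D)$) of the maximum over edges $t$ of $T$ of $|S^V_{\beta(Y)}\cup S^V_{E(D)\setminus\beta(Y)}|$, where $Y$ is the set of leaves on one side of $T-t$ (width 0 if $T$ has no edges). *)

theory Defs
  imports Main
begin

definition is_dag :: "'a set \<Rightarrow> ('a \<times> 'a) set \<Rightarrow> bool" where
  "is_dag V E \<longleftrightarrow> finite V \<and> E \<subseteq> V \<times> V \<and> acyclic E"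

definition SV :: "('a \<times> 'a) set \<Rightarrow> ('a \<times> 'a) set \<Rightarrow> 'a set" where
  "SV E X = {y. \<exists>x z. (x, y) \<in> E - X \<and> (y, z) \<in> X}"

definition tadj :: "nat set set \<Rightarrow> (nat \<times> nat) set" where
  "tadj TE = {(u, v). {u, v} \<in> TE}"

definition is_tree :: "nat set \<Rightarrow> nat set set \<Rightarrow> bool" where
  "is_tree N TE \<longleftrightarrow> finite N \<and> N \<noteq> {} \<and>
     (\<forall>e\<in>TE. \<exists>u v. e = {u, v} \<and> u \<noteq> v \<and> u \<in> N \<and> v \<in> N) \<and>
     (\<forall>u\<in>N. \<forall>v\<in>N. (u, v) \<in> (tadj TE)\<^sup>*) \<and>
     (\<forall>e\<in>TE. \<forall>u v. e = {u, v} \<longrightarrow> (u, v) \<notin> (tadj (TE - {e}))\<^sup>*)"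

definition tdeg :: "nat set set \<Rightarrow> nat \<Rightarrow> nat" where
  "tdeg TE v = card {e\<in>TE. v \<in> e}"

text \<open>Leaves: nodes of degree at most one (so the single node of a one-node tree is a leaf).\<close>
definition tleaves :: "nat set \<Rightarrow> nat set set \<Rightarrow> nat set" where
  "tleaves N TE = {v\<in>N. tdeg TE v \<le> 1}"

definition is_branch_decomp :: "('a \<times> 'a) set \<Rightarrow> nat set \<Rightarrow> nat set set \<Rightarrow> (nat \<Rightarrow> 'a \<times> 'a) \<Rightarrow> bool" where
  "is_branch_decomp E N TE \<beta> \<longleftrightarrow> is_tree N TE \<and> (\<forall>v\<in>N. tdeg TE v \<le> 3) \<and>
     bij_betw \<beta> (tleaves N TE) E"

definition edge_width :: "('a \<times> 'a) set \<Rightarrow> nat set \<Rightarrow> nat set set \<Rightarrow> (nat \<Rightarrow> 'a \<times> 'a) \<Rightarrow> nat set \<Rightarrow> nat" where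
  "edge_width E N TE \<beta> t =
     (let a = (SOME a. \<exists>b. t = {a, b});
          Y = {y \<in> tleaves N TE. (a, y) \<in> (tadj (TE - {t}))\<^sup>*};
          X = \<beta> ` Y
      in card (SV E X \<union> SV E (E - X)))"

definition decomp_width :: "('a \<times> 'a) set \<Rightarrow> nat set \<Rightarrow> nat set set \<Rightarrow> (nat \<Rightarrow> 'a \<times> 'a) \<Rightarrow> nat" where
  "decomp_width E N TE \<beta> = Max (insert 0 (edge_width E N TE \<beta> ` TE))"

definition dbw :: "('a \<times> 'a) set \<Rightarrow> nat" where
  "dbw E = Inf {w. \<exists>N TE \<beta>. is_branch_decomp E N TE \<beta> \<and> w = decomp_width E N TE \<beta>}"

end

theory Submission
  imports Defs
begin

text \<open>Take for D the transitive tournament on p vertices. The tree of a branch decomposition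
  is subcubic with one leaf per arc, so once there are at least 3k arcs some tree edge splits
  them into two sets X and E - X of at least k arcs each. A vertex other than the source 0 and
  the sink p - 1 that is off the boundary of this cut has all its arcs on the same side, and any
  two such vertices are adjacent; so one side of the cut consists of arcs between boundary
  vertices, the source and the sink. With k = (n + 1)^2 + 1 this forces at least n boundary
  vertices.\<close>

section \<open>Cuts of the transitive tournament\<close>

definition cut_boundary :: "('a \<times> 'a) set \<Rightarrow> ('a \<times> 'a) set \<Rightarrow> 'a set" where
  "cut_boundary E X = SV E X \<union> SV E (E - X)"

lemma arcs_through_agree:
  assumes "y \<notin> cut_boundary E X" "(x, y) \<in> E" "(y, z) \<in> E"
  shows "(x, y) \<in> X \<longleftrightarrow> (y, z) \<in> X"
  using assms unfolding cut_boundary_def SV_def by blast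

lemma finite_cut_boundary:
  assumes "finite E" shows "finite (cut_boundary E X)"
proof -
  have "SV E Y \<subseteq> snd ` E" for Y unfolding SV_def by force
  then show ?thesis
    unfolding cut_boundary_def using assms by (meson finite_Un finite_imageI finite_subset)
qed

definition tournament :: "nat \<Rightarrow> (nat \<times> nat) set" where
  "tournament p = {(i, j). i < j \<and> j < p}"

lemma tournament_subset: "tournament p \<subseteq> {..<p} \<times> {..<p}"
  by (auto simp: tournament_def)

lemma finite_tournament: "finite (tournament p)"
  using tournament_subset by (rule finite_subset) simp

lemma acyclic_tournament: "acyclic (tournament p)"
  by (rule acyclic_subset[OF wf_acyclic[OF wf_less_than]]) (auto simp: tournament_def)

lemma card_tournament_ge: "p - 1 \<le> card (tournament p)"
proof -
  have "(\<lambda>j. (0::nat, j)) ` {1..<p} \<subseteq> tournament p" by (auto simp: tournament_def)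
  then have "card ((\<lambda>j. (0::nat, j)) ` {1..<p}) \<le> card (tournament p)"
    using card_mono finite_tournament by blast
  moreover have "card ((\<lambda>j. (0::nat, j)) ` {1..<p}) = p - 1" by (simp add: card_image inj_on_def)
  ultimately show ?thesis by simp
qed

text \<open>An inner vertex y has the in-neighbour 0 and the out-neighbour p - 1; every arc at y
  is compared with (y, p - 1) through one of them.\<close>
lemma tournament_arcs_at_agree:
  assumes y: "y \<notin> cut_boundary (tournament p) X" "0 < y" "y < p - 1"
    and uv: "(u, v) \<in> tournament p" "y \<in> {u, v}"
  shows "(u, v) \<in> X \<longleftrightarrow> (y, p - 1) \<in> X"
proof -
  have out: "(y, p - 1) \<in> tournament p" and into: "(0, y) \<in> tournament p"
    using y by (auto simp: tournament_def)
  show ?thesis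
  proof (cases "v = y")
    case True
    then show ?thesis using arcs_through_agree[OF y(1) _ out] uv by auto
  next
    case False
    then have "u = y" using uv by auto
    then show ?thesis using arcs_through_agree[OF y(1) into] out uv by auto
  qed
qed

text \<open>Vertices off the boundary are monochromatic, and two of them are joined by an arc, so
  they all have the same colour; hence all arcs of the other colour lie inside the boundary
  (together with the vertices 0 and p - 1).\<close>
lemma tournament_cut_side_within_boundary:
  assumes "X \<subseteq> tournament p"
  defines "B \<equiv> cut_boundary (tournament p) X \<union> {0, p - 1}"
  shows "X \<subseteq> B \<times> B \<or> tournament p - X \<subseteq> B \<times> B"
proof (rule ccontr)
  have colour: "(u, v) \<in> X \<longleftrightarrow> (y, p - 1) \<in> X" "0 < y" "y < p - 1"
    if "(u, v) \<in> tournament p" "y \<in> {u, v}" "y \<notin> B" for u v y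
  proof -
    show "0 < y" "y < p - 1" using that by (auto simp: B_def tournament_def)
    then show "(u, v) \<in> X \<longleftrightarrow> (y, p - 1) \<in> X"
      using tournament_arcs_at_agree that by (auto simp: B_def)
  qed
  assume "\<not> ?thesis"
  then obtain u v u' v' where uv: "(u, v) \<in> X" "\<not> (u \<in> B \<and> v \<in> B)"
    and uv': "(u', v') \<in> tournament p - X" "\<not> (u' \<in> B \<and> v' \<in> B)" by auto
  obtain y where y_at: "y \<in> {u, v}" "y \<notin> B" using uv(2) by auto
  obtain y' where y'_at: "y' \<in> {u', v'}" "y' \<notin> B" using uv'(2) by auto
  have "(u, v) \<in> tournament p" using uv(1) assms(1) by auto
  then have y: "(y, p - 1) \<in> X" "0 < y" "y < p - 1" using colour[OF _ y_at] uv(1) by auto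
  have y': "(y', p - 1) \<notin> X" "0 < y'" "y' < p - 1"
    using colour[OF DiffD1[OF uv'(1)] y'_at] uv'(1) by auto
  have "y \<noteq> y'" using y y' by auto
  then have f: "(min y y', max y y') \<in> tournament p"
    using y y' by (auto simp: tournament_def min_def max_def)
  have "y \<in> {min y y', max y y'}" "y' \<in> {min y y', max y y'}" by (auto simp: min_def max_def)
  then show False using colour[OF f _ y_at(2)] colour[OF f _ y'_at(2)] y y' by blast
qed

lemma tournament_cut_boundary_large:
  assumes "X \<subseteq> tournament p" "(n + 1)\<^sup>2 < card X" "(n + 1)\<^sup>2 < card (tournament p - X)"
  shows "n \<le> card (cut_boundary (tournament p) X)"
proof (rule ccontr)
  define B where "B = cut_boundary (tournament p) X \<union> {0, p - 1}"
  assume "\<not> ?thesis"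
  moreover have "card {0, p - 1} \<le> 2" by (simp add: card_insert_if)
  ultimately have "card B \<le> n + 1"
    using card_Un_le[of "cut_boundary (tournament p) X" "{0, p - 1}"] unfolding B_def by linarith
  then have "card (B \<times> B) \<le> (n + 1)\<^sup>2"
    unfolding card_cartesian_product power2_eq_square using mult_le_mono by blast
  moreover have "finite (B \<times> B)"
    using finite_cut_boundary[OF finite_tournament] by (simp add: B_def)
  ultimately have small: "card Y \<le> (n + 1)\<^sup>2" if "Y \<subseteq> B \<times> B" for Y
    using that card_mono le_trans by blast
  have "X \<subseteq> B \<times> B \<or> tournament p - X \<subseteq> B \<times> B"
    using tournament_cut_side_within_boundary[OF assms(1)] unfolding B_def .
  then show False using small assms(2,3) by (meson leD)
qed

section \<open>Sides of tree edges\<close>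

lemma sym_tadj: "sym (tadj F)"
  by (auto simp: sym_def tadj_def insert_commute)

lemma tadj_reach_sym: "(x, y) \<in> (tadj F)\<^sup>* \<Longrightarrow> (y, x) \<in> (tadj F)\<^sup>*"
  using sym_rtrancl[OF sym_tadj] by (rule symD)

lemma tadj_reach_mono: "F \<subseteq> G \<Longrightarrow> (tadj F)\<^sup>* \<subseteq> (tadj G)\<^sup>*"
  by (rule rtrancl_mono) (auto simp: tadj_def)

lemma tadj_reach_closed:
  assumes "(x, y) \<in> (tadj F)\<^sup>*" "x \<in> C" "\<And>a b. a \<in> C \<Longrightarrow> {a, b} \<in> F \<Longrightarrow> b \<in> C"
  shows "y \<in> C"
  using assms(1,2) by induction (auto simp: tadj_def assms(3))

lemma tadj_reach_avoiding_or_from_end: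
  "(x, z) \<in> (tadj F)\<^sup>* \<Longrightarrow>
   (x, z) \<in> (tadj (F - {e}))\<^sup>* \<or> (\<exists>w\<in>e. (w, z) \<in> (tadj (F - {e}))\<^sup>*)"
proof (induction rule: rtrancl_induct)
  case (step y z)
  show ?case
  proof (cases "{y, z} = e")
    case False
    then have "(y, z) \<in> tadj (F - {e})" using step(2) by (auto simp: tadj_def)
    then show ?thesis using step(3) by (meson rtrancl.rtrancl_into_rtrancl)
  qed auto
qed simp

lemma tadj_reach_first_edge:
  "(b, y) \<in> (tadj F)\<^sup>* \<Longrightarrow> y = b \<or> (\<exists>c. {b, c} \<in> F \<and> (c, y) \<in> (tadj (F - {{b, c}}))\<^sup>*)"
proof (induction rule: rtrancl_induct)
  case (step z w)
  have zw: "{z, w} \<in> F" using step(2) by (simp add: tadj_def)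
  from step(3) show ?case
  proof
    assume "\<exists>c. {b, c} \<in> F \<and> (c, z) \<in> (tadj (F - {{b, c}}))\<^sup>*"
    then obtain c where c: "{b, c} \<in> F" "(c, z) \<in> (tadj (F - {{b, c}}))\<^sup>*" by blast
    show ?thesis
    proof (cases "{z, w} = {b, c}")
      case False
      then have "(z, w) \<in> tadj (F - {{b, c}})" using zw by (auto simp: tadj_def)
      then show ?thesis using c by (meson rtrancl.rtrancl_into_rtrancl)
    next
      case True
      then show ?thesis using c by (auto simp: doubleton_eq_iff)
    qed
  qed (use zw in auto)
qed simp

lemma finite_tree_nodes: "is_tree N TE \<Longrightarrow> finite N"
  unfolding is_tree_def by (elim conjE)

lemma tree_edges_doubletons:
  "is_tree N TE \<Longrightarrow> \<forall>e\<in>TE. \<exists>u v. e = {u, v} \<and> u \<noteq> v \<and> u \<in> N \<and> v \<in> N"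
  unfolding is_tree_def by (elim conjE)

lemma tree_edgeD:
  assumes "is_tree N TE" "{u, v} \<in> TE" shows "u \<noteq> v \<and> u \<in> N \<and> v \<in> N"
proof -
  obtain a b where "{u, v} = {a, b}" "a \<noteq> b" "a \<in> N" "b \<in> N"
    using tree_edges_doubletons assms by blast
  then show ?thesis by (auto simp: doubleton_eq_iff)
qed

lemma tree_edge_bridge:
  assumes "is_tree N TE" "{u, v} \<in> TE" shows "(u, v) \<notin> (tadj (TE - {{u, v}}))\<^sup>*"
proof -
  have "\<forall>e\<in>TE. \<forall>u v. e = {u, v} \<longrightarrow> (u, v) \<notin> (tadj (TE - {e}))\<^sup>*"
    using assms(1) unfolding is_tree_def by (elim conjE)
  then show ?thesis using assms(2) by blast
qed

lemma tree_connected: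
  assumes "is_tree N TE" "u \<in> N" "v \<in> N" shows "(u, v) \<in> (tadj TE)\<^sup>*"
proof -
  have "\<forall>u\<in>N. \<forall>v\<in>N. (u, v) \<in> (tadj TE)\<^sup>*" using assms(1) unfolding is_tree_def by (elim conjE)
  then show ?thesis using assms(2,3) by blast
qed

lemma finite_tree_edges:
  assumes t: "is_tree N TE" shows "finite TE"
proof -
  have "TE \<subseteq> Pow N"
  proof
    fix e assume "e \<in> TE"
    then obtain u v where "e = {u, v}" "u \<in> N" "v \<in> N" using tree_edges_doubletons[OF t] by blast
    then show "e \<in> Pow N" by simp
  qed
  then show ?thesis using finite_tree_nodes[OF t] by (meson finite_Pow_iff finite_subset)
qed

lemma finite_tleaves: "is_tree N TE \<Longrightarrow> finite (tleaves N TE)"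
  unfolding tleaves_def using finite_tree_nodes by simp

definition subtree :: "nat set set \<Rightarrow> nat set \<Rightarrow> nat \<Rightarrow> nat set" where
  "subtree TE t x = {z. (x, z) \<in> (tadj (TE - {t}))\<^sup>*}"

definition leaf_side :: "nat set \<Rightarrow> nat set set \<Rightarrow> nat set \<Rightarrow> nat \<Rightarrow> nat set" where
  "leaf_side N TE t x = tleaves N TE \<inter> subtree TE t x"

lemma subtree_subset_nodes:
  assumes t: "is_tree N TE" and "x \<in> N"
  shows "subtree TE t x \<subseteq> N"
proof
  fix z assume "z \<in> subtree TE t x"
  then have "(x, z) \<in> (tadj (TE - {t}))\<^sup>*" by (simp add: subtree_def)
  then show "z \<in> N"
    by (rule tadj_reach_closed) (use assms tree_edgeD[OF t] in \<open>auto\<close>)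
qed

lemma leaf_sides_partition:
  assumes t: "is_tree N TE" and e: "{u, v} \<in> TE"
  shows "leaf_side N TE {u, v} u \<union> leaf_side N TE {u, v} v = tleaves N TE"
    and "leaf_side N TE {u, v} u \<inter> leaf_side N TE {u, v} v = {}"
proof -
  have "y \<in> leaf_side N TE {u, v} u \<union> leaf_side N TE {u, v} v" if y: "y \<in> tleaves N TE" for y
  proof -
    have "(u, y) \<in> (tadj TE)\<^sup>*"
      using y tree_connected[OF t] tree_edgeD[OF t e] by (auto simp: tleaves_def)
    from tadj_reach_avoiding_or_from_end[OF this, of "{u, v}"] show ?thesis
      using y by (auto simp: leaf_side_def subtree_def)
  qed
  then show "leaf_side N TE {u, v} u \<union> leaf_side N TE {u, v} v = tleaves N TE"
    by (auto simp: leaf_side_def)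
  show "leaf_side N TE {u, v} u \<inter> leaf_side N TE {u, v} v = {}"
  proof (rule ccontr)
    assume "\<not> ?thesis"
    then obtain y where "(u, y) \<in> (tadj (TE - {{u, v}}))\<^sup>*" "(v, y) \<in> (tadj (TE - {{u, v}}))\<^sup>*"
      by (auto simp: leaf_side_def subtree_def)
    then have "(u, v) \<in> (tadj (TE - {{u, v}}))\<^sup>*" by (meson tadj_reach_sym rtrancl_trans)
    then show False using tree_edge_bridge[OF t e] by simp
  qed
qed

lemma card_leaf_sides:
  assumes "is_tree N TE" "{u, v} \<in> TE"
  shows "card (leaf_side N TE {u, v} u) + card (leaf_side N TE {u, v} v) = card (tleaves N TE)"
  using leaf_sides_partition[OF assms] finite_tleaves[OF assms(1)]
  by (metis card_Un_disjoint finite_Un)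

lemma leaf_side_subset_children:
  "leaf_side N TE t b \<subseteq> {b} \<union> (\<Union>c\<in>{c. {b, c} \<in> TE - {t}}. leaf_side N TE {b, c} c)"
proof
  fix y assume y: "y \<in> leaf_side N TE t b"
  then have "(b, y) \<in> (tadj (TE - {t}))\<^sup>*" by (simp add: leaf_side_def subtree_def)
  from tadj_reach_first_edge[OF this] consider "y = b"
    | c where "{b, c} \<in> TE - {t}" "(c, y) \<in> (tadj (TE - {t} - {{b, c}}))\<^sup>*" by blast
  then show "y \<in> {b} \<union> (\<Union>c\<in>{c. {b, c} \<in> TE - {t}}. leaf_side N TE {b, c} c)"
  proof cases
    case (2 c)
    then have "(c, y) \<in> (tadj (TE - {{b, c}}))\<^sup>*"
      using tadj_reach_mono[of "TE - {t} - {{b, c}}" "TE - {{b, c}}"] by blast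
    then show ?thesis using 2(1) y by (auto simp: leaf_side_def subtree_def)
  qed simp
qed

lemma card_other_neighbours:
  assumes "finite TE" "t \<in> TE" "b \<in> t"
  shows "finite {c. {b, c} \<in> TE - {t}}" and "card {c. {b, c} \<in> TE - {t}} \<le> tdeg TE b - 1"
proof -
  have inj: "inj_on (\<lambda>c. {b, c}) {c. {b, c} \<in> TE - {t}}" by (rule inj_onI) (auto simp: doubleton_eq_iff)
  have sub: "(\<lambda>c. {b, c}) ` {c. {b, c} \<in> TE - {t}} \<subseteq> {e \<in> TE. b \<in> e} - {t}" by auto
  have "card ({e \<in> TE. b \<in> e} - {t}) = tdeg TE b - 1" unfolding tdeg_def using assms by simp
  then show "card {c. {b, c} \<in> TE - {t}} \<le> tdeg TE b - 1"
    using card_inj_on_le[OF inj sub] assms(1) by simp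
  show "finite {c. {b, c} \<in> TE - {t}}" using inj_on_finite[OF inj sub] assms(1) by simp
qed

lemma subtree_child_psubset:
  assumes t: "is_tree N TE" and ab: "{a, b} \<in> TE" and bc: "{b, c} \<in> TE" "{b, c} \<noteq> {a, b}"
  shows "subtree TE {b, c} c \<subset> subtree TE {a, b} b"
proof -
  have "(b, c) \<notin> (tadj (TE - {{b, c}}))\<^sup>*" using tree_edge_bridge[OF t bc(1)] .
  then have no_return: "(z, b) \<notin> (tadj (TE - {{b, c}}))\<^sup>*" if "z \<in> subtree TE {b, c} c" for z
    using that by (auto simp: subtree_def intro: tadj_reach_sym rtrancl_trans)
  have "z \<in> subtree TE {a, b} b" if z: "z \<in> subtree TE {b, c} c" for z
  proof -
    have "(z, c) \<in> (tadj (TE - {{b, c}}))\<^sup>*" using z by (simp add: subtree_def tadj_reach_sym)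
    from tadj_reach_avoiding_or_from_end[OF this, of "{a, b}"]
    have "(z, c) \<in> (tadj (TE - {{b, c}} - {{a, b}}))\<^sup>*"
    proof
      assume "\<exists>w\<in>{a, b}. (w, c) \<in> (tadj (TE - {{b, c}} - {{a, b}}))\<^sup>*"
      then have "(a, c) \<in> (tadj (TE - {{b, c}}))\<^sup>* \<or> (b, c) \<in> (tadj (TE - {{b, c}}))\<^sup>*"
        using tadj_reach_mono[of "TE - {{b, c}} - {{a, b}}" "TE - {{b, c}}"] by blast
      moreover have "(b, a) \<in> tadj (TE - {{b, c}})" using ab bc(2) by (auto simp: tadj_def insert_commute)
      ultimately have "(c, b) \<in> (tadj (TE - {{b, c}}))\<^sup>*"
        by (meson converse_rtrancl_into_rtrancl tadj_reach_sym)
      then show ?thesis using no_return z by (auto simp: subtree_def)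
    qed
    then have "(c, z) \<in> (tadj (TE - {{a, b}}))\<^sup>*"
      using tadj_reach_mono[of "TE - {{b, c}} - {{a, b}}" "TE - {{a, b}}"] tadj_reach_sym by blast
    moreover have "(b, c) \<in> tadj (TE - {{a, b}})" using bc by (auto simp: tadj_def)
    ultimately show ?thesis by (simp add: subtree_def converse_rtrancl_into_rtrancl)
  qed
  moreover have "b \<in> subtree TE {a, b} b" "b \<notin> subtree TE {b, c} c"
    using no_return by (auto simp: subtree_def)
  ultimately show ?thesis by blast
qed

section \<open>Balanced edges of subcubic trees\<close>

lemma tree_has_edge_at:
  assumes "is_tree N TE" "u \<in> N" "v \<in> N" "u \<noteq> v"
  shows "\<exists>w. {u, w} \<in> TE"
proof -
  have "(u, v) \<in> (tadj TE)\<^sup>*" using tree_connected assms(1-3) .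
  then obtain w where "(u, w) \<in> tadj TE" using assms(4) by (metis converse_rtranclE)
  then show ?thesis by (auto simp: tadj_def)
qed

text \<open>If no edge at b were balanced, each of the at most two further edges at b would have fewer
  than k leaves beyond it, leaving at most 2k - 1 < card (tleaves N TE) - k leaves on b's side.\<close>
lemma balanced_edge_next_to_heavy:
  assumes t: "is_tree N TE" and deg: "tdeg TE b \<le> 3"
    and k: "0 < k" "3 * k \<le> card (tleaves N TE)"
    and heavy: "{a, b} \<in> TE" "card (tleaves N TE) - k < card (leaf_side N TE {a, b} b)"
    and light: "\<And>c. {b, c} \<in> TE \<Longrightarrow> {b, c} \<noteq> {a, b} \<Longrightarrow>
      card (leaf_side N TE {b, c} c) \<le> card (tleaves N TE) - k"
  shows "\<exists>c. {b, c} \<in> TE \<and> k \<le> card (leaf_side N TE {b, c} b) \<and> k \<le> card (leaf_side N TE {b, c} c)"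
proof (rule ccontr)
  define C where "C = {c. {b, c} \<in> TE - {{a, b}}}"
  assume "\<not> ?thesis"
  then have small: "card (leaf_side N TE {b, c} c) \<le> k - 1" if "c \<in> C" for c
    using that light[of c] card_leaf_sides[OF t, of b c] k unfolding C_def by fastforce
  have finTE: "finite TE" using finite_tree_edges[OF t] .
  have finC: "finite C" and cardC: "card C \<le> 2"
    using card_other_neighbours[OF finTE heavy(1), of b] deg unfolding C_def by auto
  have "finite (\<Union>c\<in>C. leaf_side N TE {b, c} c)"
    by (rule finite_subset[OF _ finite_tleaves[OF t]]) (auto simp: leaf_side_def)
  then have "card (leaf_side N TE {a, b} b) \<le> card ({b} \<union> (\<Union>c\<in>C. leaf_side N TE {b, c} c))"
    using leaf_side_subset_children unfolding C_def by (intro card_mono) auto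
  also have "\<dots> \<le> 1 + card (\<Union>c\<in>C. leaf_side N TE {b, c} c)"
    using card_Un_le[of "{b}"] by simp
  also have "\<dots> \<le> 1 + (\<Sum>c\<in>C. card (leaf_side N TE {b, c} c))"
    using card_UN_le[OF finC] by simp
  also have "\<dots> \<le> 1 + card C * (k - 1)"
    using sum_bounded_above[of C _ "k - 1"] small by simp
  also have "\<dots> \<le> 1 + 2 * (k - 1)" using cardC by simp
  finally show False using heavy(2) k by linarith
qed

lemma balanced_tree_edge:
  assumes t: "is_tree N TE" and deg: "\<forall>v\<in>N. tdeg TE v \<le> 3"
    and k: "0 < k" "3 * k \<le> card (tleaves N TE)"
  shows "\<exists>u v. {u, v} \<in> TE \<and> k \<le> card (leaf_side N TE {u, v} u) \<and> k \<le> card (leaf_side N TE {u, v} v)"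
proof -
  define L where "L = card (tleaves N TE)"
  define heavy where "heavy = (\<lambda>(a, b). {a, b} \<in> TE \<and> L - k < card (leaf_side N TE {a, b} b))"
  have balanced: "k \<le> card (leaf_side N TE {u, v} u) \<and> k \<le> card (leaf_side N TE {u, v} v)"
    if "{u, v} \<in> TE" "\<not> heavy (u, v)" "\<not> heavy (v, u)" for u v
    using that card_leaf_sides[OF t that(1)] k unfolding heavy_def L_def by (auto simp: insert_commute)
  show ?thesis
  proof (cases "\<exists>ab. heavy ab")
    case True
    define size where "size = (\<lambda>(a, b). card (subtree TE {a, b} b))"
    obtain ab where ab: "heavy ab" and min: "\<And>cd. heavy cd \<Longrightarrow> size ab \<le> size cd"
      using ex_has_least_nat[of heavy _ size] True by blast
    obtain a b where [simp]: "ab = (a, b)" by fastforce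
    have e: "{a, b} \<in> TE" using ab by (simp add: heavy_def)
    have "finite (subtree TE {a, b} b)"
      using subtree_subset_nodes[OF t] tree_edgeD[OF t e] finite_tree_nodes[OF t] finite_subset by blast
    then have light: "card (leaf_side N TE {b, c} c) \<le> card (tleaves N TE) - k"
      if "{b, c} \<in> TE" "{b, c} \<noteq> {a, b}" for c
      using min[of "(b, c)"] psubset_card_mono[OF _ subtree_child_psubset[OF t e that]] that
      by (fastforce simp: size_def heavy_def L_def)
    have "tdeg TE b \<le> 3" using deg tree_edgeD[OF t e] by blast
    from balanced_edge_next_to_heavy[OF t this k e _ light] ab show ?thesis
      unfolding heavy_def L_def by auto
  next
    case False
    have "\<not> card (tleaves N TE) \<le> Suc 0" using k by linarith
    then obtain y y' where "y \<in> tleaves N TE" "y' \<in> tleaves N TE" "y \<noteq> y'"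
      using card_le_Suc0_iff_eq[OF finite_tleaves[OF t]] by blast
    then obtain w where "{y, w} \<in> TE" using tree_has_edge_at[OF t] by (auto simp: tleaves_def)
    then show ?thesis using balanced False by blast
  qed
qed

section \<open>Caterpillar decompositions\<close>

text \<open>The caterpillar with m leaves: leaf i < m hangs at the spine node m + i, and the spine is the
  path m, m + 1, ..., 2m - 1.\<close>
definition caterpillar_nodes :: "nat \<Rightarrow> nat set" where
  "caterpillar_nodes m = {..<2 * m}"

definition caterpillar_edges :: "nat \<Rightarrow> nat set set" where
  "caterpillar_edges m = {{i, m + i} |i. i < m} \<union> {{m + i, Suc (m + i)} |i. Suc i < m}"

lemma caterpillar_spine_reach: "i < m \<Longrightarrow> (m, m + i) \<in> (tadj (caterpillar_edges m))\<^sup>*"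
proof (induction i)
  case (Suc i)
  have "(m + i, m + Suc i) \<in> tadj (caterpillar_edges m)"
    using Suc(2) unfolding tadj_def caterpillar_edges_def by auto
  then show ?case using Suc by (meson Suc_lessD rtrancl.rtrancl_into_rtrancl)
qed simp

lemma caterpillar_reach_root:
  assumes "u \<in> caterpillar_nodes m" shows "(u, m) \<in> (tadj (caterpillar_edges m))\<^sup>*"
proof (cases "u < m")
  case True
  have "(u, m + u) \<in> tadj (caterpillar_edges m)"
    using True unfolding tadj_def caterpillar_edges_def by auto
  then show ?thesis
    using caterpillar_spine_reach[OF True] tadj_reach_sym by (meson converse_rtrancl_into_rtrancl)
next
  case False
  then have "u - m < m" "u = m + (u - m)" using assms by (auto simp: caterpillar_nodes_def)
  then show ?thesis using caterpillar_spine_reach[of "u - m" m] tadj_reach_sym by metis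
qed

lemma caterpillar_edge_bridge:
  assumes "e \<in> caterpillar_edges m"
  shows "\<exists>a b. e = {a, b} \<and> (a, b) \<notin> (tadj (caterpillar_edges m - {e}))\<^sup>*"
proof -
  from assms consider (leaf) i where "i < m" "e = {i, m + i}"
    | (spine) i where "Suc i < m" "e = {m + i, Suc (m + i)}"
    unfolding caterpillar_edges_def by blast
  then show ?thesis
  proof cases
    case (leaf i)
    have "(i, m + i) \<notin> (tadj (caterpillar_edges m - {e}))\<^sup>*"
    proof
      assume "(i, m + i) \<in> (tadj (caterpillar_edges m - {e}))\<^sup>*"
      then have "m + i \<in> {i}"
        by (rule tadj_reach_closed) (use leaf in \<open>auto simp: caterpillar_edges_def doubleton_eq_iff\<close>)
      then show False using leaf by simp
    qed
    then show ?thesis using leaf by blast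
  next
    case (spine i)
    text \<open>Without this spine edge, the leaves and spine nodes up to index i are closed.\<close>
    define C where "C = {x. x \<le> i \<or> (m \<le> x \<and> x \<le> m + i)}"
    have "(m + i, Suc (m + i)) \<notin> (tadj (caterpillar_edges m - {e}))\<^sup>*"
    proof
      assume "(m + i, Suc (m + i)) \<in> (tadj (caterpillar_edges m - {e}))\<^sup>*"
      then have "Suc (m + i) \<in> C"
        by (rule tadj_reach_closed) (use spine in \<open>auto simp: C_def caterpillar_edges_def doubleton_eq_iff\<close>)
      then show False by (simp add: C_def)
    qed
    then show ?thesis using spine by blast
  qed
qed

lemma is_tree_caterpillar:
  assumes "2 \<le> m" shows "is_tree (caterpillar_nodes m) (caterpillar_edges m)"
  unfolding is_tree_def
proof (intro conjI ballI allI impI)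
  show "finite (caterpillar_nodes m)" by (simp add: caterpillar_nodes_def)
  have "0 \<in> caterpillar_nodes m" using assms by (simp add: caterpillar_nodes_def)
  then show "caterpillar_nodes m \<noteq> {}" by blast
next
  fix e assume "e \<in> caterpillar_edges m"
  then show "\<exists>u v. e = {u, v} \<and> u \<noteq> v \<and> u \<in> caterpillar_nodes m \<and> v \<in> caterpillar_nodes m"
    unfolding caterpillar_edges_def caterpillar_nodes_def by fastforce
next
  fix u v assume "u \<in> caterpillar_nodes m" "v \<in> caterpillar_nodes m"
  then show "(u, v) \<in> (tadj (caterpillar_edges m))\<^sup>*"
    using caterpillar_reach_root tadj_reach_sym by (meson rtrancl_trans)
next
  fix e u v assume "e \<in> caterpillar_edges m" "e = {u, v}"
  then show "(u, v) \<notin> (tadj (caterpillar_edges m - {e}))\<^sup>*"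
    using caterpillar_edge_bridge tadj_reach_sym by (metis doubleton_eq_iff)
qed

lemma finite_caterpillar_edges: "finite (caterpillar_edges m)"
  by (rule finite_subset[of _ "Pow {..<2 * m}"]) (auto simp: caterpillar_edges_def)

lemma caterpillar_edges_at_leaf: "i < m \<Longrightarrow> {e \<in> caterpillar_edges m. i \<in> e} = {{i, m + i}}"
  unfolding caterpillar_edges_def by auto

lemma caterpillar_edges_at_spine:
  "{e \<in> caterpillar_edges m. m + i \<in> e} \<subseteq> {{i, m + i}, {m + i, Suc (m + i)}, {m + (i - 1), m + i}}"
  unfolding caterpillar_edges_def by (auto simp: doubleton_eq_iff)

lemma tdeg_caterpillar_le:
  assumes "v \<in> caterpillar_nodes m" shows "tdeg (caterpillar_edges m) v \<le> 3"
proof (cases "v < m")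
  case True
  then show ?thesis by (simp add: tdeg_def caterpillar_edges_at_leaf)
next
  case False
  define i where "i = v - m"
  have v: "v = m + i" using False by (simp add: i_def)
  have "tdeg (caterpillar_edges m) v \<le> card {{i, m + i}, {m + i, Suc (m + i)}, {m + (i - 1), m + i}}"
    unfolding tdeg_def v by (rule card_mono[OF _ caterpillar_edges_at_spine]) simp
  also have "\<dots> \<le> 3" by (simp add: card_insert_if)
  finally show ?thesis .
qed

lemma tleaves_caterpillar:
  assumes "2 \<le> m" shows "tleaves (caterpillar_nodes m) (caterpillar_edges m) = {..<m}"
proof -
  have spine_deg: "\<not> tdeg (caterpillar_edges m) (m + i) \<le> 1" if i: "i < m" for i
  proof -
    text \<open>Besides its leaf edge, a spine node has a spine neighbour, since m \<ge> 2.\<close>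
    obtain e where e: "e \<in> caterpillar_edges m" "m + i \<in> e" "e \<noteq> {i, m + i}"
    proof (cases "Suc i < m")
      case True
      then show ?thesis
        by (intro that[of "{m + i, Suc (m + i)}"]) (auto simp: caterpillar_edges_def doubleton_eq_iff)
    next
      case False
      then have "Suc (i - 1) < m" "Suc (m + (i - 1)) = m + i" using i assms by auto
      then have "{m + (i - 1), m + i} \<in> caterpillar_edges m"
        unfolding caterpillar_edges_def by (metis (mono_tags, lifting) UnI2 mem_Collect_eq)
      then show ?thesis using i by (intro that) (auto simp: doubleton_eq_iff)
    qed
    have "{{i, m + i}, e} \<subseteq> {e \<in> caterpillar_edges m. m + i \<in> e}"
      using e i by (auto simp: caterpillar_edges_def)
    then have "card {{i, m + i}, e} \<le> tdeg (caterpillar_edges m) (m + i)"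
      unfolding tdeg_def by (rule card_mono[rotated]) (simp add: finite_caterpillar_edges)
    then show ?thesis using e(3) by simp
  qed
  have leaf_deg: "tdeg (caterpillar_edges m) i \<le> 1" if "i < m" for i
    using that by (simp add: tdeg_def caterpillar_edges_at_leaf)
  show ?thesis
  proof (intro set_eqI iffI)
    fix v assume "v \<in> tleaves (caterpillar_nodes m) (caterpillar_edges m)"
    then have v: "v < 2 * m" "tdeg (caterpillar_edges m) v \<le> 1"
      by (auto simp: tleaves_def caterpillar_nodes_def)
    show "v \<in> {..<m}"
    proof (rule ccontr)
      assume "v \<notin> {..<m}"
      then have "v = m + (v - m)" "v - m < m" using v by auto
      then show False using spine_deg v(2) by metis
    qed
  qed (use leaf_deg in \<open>auto simp: tleaves_def caterpillar_nodes_def\<close>)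
qed

lemma branch_decomp_exists:
  assumes "finite E" "2 \<le> card E"
  shows "\<exists>N TE \<beta>. is_branch_decomp E N TE \<beta>"
proof -
  obtain \<beta> where "bij_betw \<beta> {0..<card E} E" using ex_bij_betw_nat_finite[OF assms(1)] by blast
  then have "is_branch_decomp E (caterpillar_nodes (card E)) (caterpillar_edges (card E)) \<beta>"
    unfolding is_branch_decomp_def
    using is_tree_caterpillar tdeg_caterpillar_le tleaves_caterpillar assms(2)
    by (simp add: atLeast0LessThan)
  then show ?thesis by blast
qed

text \<open>The infimum of the empty set of naturals is 0, hence the need for a decomposition.\<close>
lemma dbw_lower_bound:
  assumes "finite E" "2 \<le> card E"
    and "\<And>N TE \<beta>. is_branch_decomp E N TE \<beta> \<Longrightarrow> n \<le> decomp_width E N TE \<beta>"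
  shows "n \<le> dbw E"
  unfolding dbw_def using branch_decomp_exists[OF assms(1,2)] assms(3)
  by (intro cInf_greatest) auto

section \<open>Width of decompositions of tournaments\<close>

lemma edge_width_le_decomp_width:
  assumes "is_tree N TE" "t \<in> TE"
  shows "edge_width E N TE \<beta> t \<le> decomp_width E N TE \<beta>"
  unfolding decomp_width_def using assms finite_tree_edges by (intro Max_ge) auto

lemma edge_width_eq_leaf_side:
  "\<exists>a a'. {u, v} = {a, a'} \<and>
     edge_width E N TE \<beta> {u, v} = card (cut_boundary E (\<beta> ` leaf_side N TE {u, v} a))"
proof -
  define a where "a = (SOME a. \<exists>b. {u, v} = {a, b})"
  have "\<exists>a'. {u, v} = {a, a'}" unfolding a_def by (rule someI_ex) blast
  moreover have "edge_width E N TE \<beta> {u, v} = card (cut_boundary E (\<beta> ` leaf_side N TE {u, v} a))"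
    unfolding edge_width_def Let_def cut_boundary_def leaf_side_def subtree_def a_def
    by (simp add: Int_def)
  ultimately show ?thesis by blast
qed

lemma image_leaf_sides:
  assumes t: "is_tree N TE" and e: "{a, a'} \<in> TE" and \<beta>: "bij_betw \<beta> (tleaves N TE) E"
  shows "E - \<beta> ` leaf_side N TE {a, a'} a = \<beta> ` leaf_side N TE {a, a'} a'"
    and "card (\<beta> ` leaf_side N TE {a, a'} x) = card (leaf_side N TE {a, a'} x)"
proof -
  have inj: "inj_on \<beta> (tleaves N TE)" using bij_betw_imp_inj_on[OF \<beta>] .
  have sides: "leaf_side N TE {a, a'} a' = tleaves N TE - leaf_side N TE {a, a'} a"
    using leaf_sides_partition[OF t e] by blast
  show "E - \<beta> ` leaf_side N TE {a, a'} a = \<beta> ` leaf_side N TE {a, a'} a'"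
    unfolding sides bij_betw_imp_surj_on[OF \<beta>, symmetric]
    by (rule inj_on_image_set_diff[OF inj, symmetric]) (auto simp: leaf_side_def)
  show "card (\<beta> ` leaf_side N TE {a, a'} x) = card (leaf_side N TE {a, a'} x)"
    by (rule card_image[OF inj_on_subset[OF inj]]) (auto simp: leaf_side_def)
qed

lemma decomp_width_tournament_ge:
  assumes d: "is_branch_decomp (tournament p) N TE \<beta>"
    and size: "3 * ((n + 1)\<^sup>2 + 1) \<le> card (tournament p)"
  shows "n \<le> decomp_width (tournament p) N TE \<beta>"
proof -
  have t: "is_tree N TE" and deg: "\<forall>v\<in>N. tdeg TE v \<le> 3"
    and \<beta>: "bij_betw \<beta> (tleaves N TE) (tournament p)"
    using d unfolding is_branch_decomp_def by auto
  have "card (tleaves N TE) = card (tournament p)" using bij_betw_same_card[OF \<beta>] .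
  then obtain u v where uv: "{u, v} \<in> TE"
    "(n + 1)\<^sup>2 < card (leaf_side N TE {u, v} u)" "(n + 1)\<^sup>2 < card (leaf_side N TE {u, v} v)"
    using balanced_tree_edge[OF t deg, of "(n + 1)\<^sup>2 + 1"] size by auto
  obtain a a' where aa': "{u, v} = {a, a'}" and width:
    "edge_width (tournament p) N TE \<beta> {u, v} =
     card (cut_boundary (tournament p) (\<beta> ` leaf_side N TE {a, a'} a))"
    using edge_width_eq_leaf_side by metis
  have e: "{a, a'} \<in> TE" using uv aa' by simp
  have "(n + 1)\<^sup>2 < card (leaf_side N TE {a, a'} a)" "(n + 1)\<^sup>2 < card (leaf_side N TE {a, a'} a')"
    using uv aa' by (auto simp: doubleton_eq_iff insert_commute)
  moreover have "\<beta> ` leaf_side N TE {a, a'} a \<subseteq> tournament p"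
    using bij_betw_imp_surj_on[OF \<beta>] by (auto simp: leaf_side_def)
  ultimately have "n \<le> card (cut_boundary (tournament p) (\<beta> ` leaf_side N TE {a, a'} a))"
    using tournament_cut_boundary_large image_leaf_sides[OF t e \<beta>] by metis
  also have "\<dots> \<le> decomp_width (tournament p) N TE \<beta>"
    using edge_width_le_decomp_width[OF t uv(1), of "tournament p" \<beta>] width by linarith
  finally show ?thesis .
qed

theorem mainTheorem14:
  fixes n :: nat
  shows "\<exists>(V :: nat set) (E :: (nat \<times> nat) set). is_dag V E \<and> dbw E \<ge> n"
proof -
  define p where "p = 3 * ((n + 1)\<^sup>2 + 1) + 1"
  have size: "3 * ((n + 1)\<^sup>2 + 1) \<le> card (tournament p)"
    using card_tournament_ge[of p] by (simp add: p_def)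
  then have "n \<le> dbw (tournament p)"
    using dbw_lower_bound[OF finite_tournament] decomp_width_tournament_ge by fastforce
  moreover have "is_dag {..<p} (tournament p)"
    unfolding is_dag_def using tournament_subset acyclic_tournament by simp
  ultimately show ?thesis by blast
qed

end
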